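(* Let $H\subset\mathbb{R}^n$ be a smooth bounded domain, $c\in L^\infty(H)$, and let $u\in C^2(H)\cap C(\overline H)$ satisfy $D_{H,\varphi}u+c(x)u\ge0$ in $H$, $u\ge0$ in $H$, and $u=\varphi$ on $\partial H$, where $\varphi\ge0$ on $\partial H$. Then either $u>0$ in $H$ or $u\equiv0$ in $H$.
   Context: For an open set $H\subset\mathbb{R}^n$, a function $\varphi$ on $\partial H$ and $u$ on $\overline H$ with $u=\varphi$ on $\partial H$, let $v$ be the bounded harmonic function in $\Omega=H\times(0,\infty)$, continuous up to the boundary, with $v(x,0)=u(x)$ for $x\in H$ and $v(x,\lambda)=\varphi(x)$ on $\partial H\times[0,\infty)$. Define $D_{H,\varphi}u(x):=-\partial_\lambda v(x,0)$ for $x\in H$. *)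

theory Defs
  imports "HOL-Analysis.Analysis"
begin

fun Ck :: "nat \<Rightarrow> ('a::euclidean_space \<Rightarrow> real) \<Rightarrow> 'a set \<Rightarrow> bool" where
  "Ck 0 f S = continuous_on S f"
| "Ck (Suc k) f S =
     ((\<forall>x\<in>S. f differentiable (at x)) \<and> continuous_on S f \<and>
      (\<forall>b\<in>Basis. Ck k (\<lambda>x. frechet_derivative f (at x) b) S))"

definition smooth_on :: "('a::euclidean_space \<Rightarrow> real) \<Rightarrow> 'a set \<Rightarrow> bool" where
  "smooth_on f S \<longleftrightarrow> (\<forall>k. Ck k f S)"

definition laplacian :: "('a::euclidean_space \<Rightarrow> real) \<Rightarrow> 'a \<Rightarrow> real" where
  "laplacian f x = (\<Sum>b\<in>Basis. frechet_derivative (\<lambda>y. frechet_derivative f (at y) b) (at x) b)"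

definition harmonic_on :: "('a::euclidean_space \<Rightarrow> real) \<Rightarrow> 'a set \<Rightarrow> bool" where
  "harmonic_on f S \<longleftrightarrow> open S \<and> Ck 2 f S \<and> (\<forall>x\<in>S. laplacian f x = 0)"

definition smooth_boundary :: "'a::euclidean_space set \<Rightarrow> bool" where
  "smooth_boundary H \<longleftrightarrow>
     (\<forall>p\<in>frontier H. \<exists>r>0. \<exists>\<rho>::'a \<Rightarrow> real.
        smooth_on \<rho> (ball p r) \<and>
        (\<forall>x\<in>ball p r. frechet_derivative \<rho> (at x) \<noteq> (\<lambda>_. 0)) \<and>
        H \<inter> ball p r = {x\<in>ball p r. \<rho> x < 0})"

definition smooth_bounded_domain :: "'a::euclidean_space set \<Rightarrow> bool" where
  "smooth_bounded_domain H \<longleftrightarrow>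
     open H \<and> connected H \<and> H \<noteq> {} \<and> bounded H \<and> smooth_boundary H"

definition Linfty_on :: "('a::euclidean_space \<Rightarrow> real) \<Rightarrow> 'a set \<Rightarrow> bool" where
  "Linfty_on c H \<longleftrightarrow> set_borel_measurable lebesgue H c \<and>
     (\<exists>M. AE x in lebesgue. x \<in> H \<longrightarrow> \<bar>c x\<bar> \<le> M)"

definition harmonic_ext ::
  "'a::euclidean_space set \<Rightarrow> ('a \<Rightarrow> real) \<Rightarrow> ('a \<Rightarrow> real) \<Rightarrow> ('a \<times> real \<Rightarrow> real) \<Rightarrow> bool" where
  "harmonic_ext H \<phi> u v \<longleftrightarrow>
     bounded (v ` (H \<times> {0<..})) \<and>
     continuous_on (closure (H \<times> {0<..})) v \<and>
     harmonic_on v (H \<times> {0<..}) \<and>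
     (\<forall>x\<in>H. v (x, 0) = u x) \<and>
     (\<forall>x\<in>frontier H. \<forall>t\<ge>0. v (x, t) = \<phi> x)"

text \<open>D_{H,\<phi>} u (x) = d  means  d = - \<partial>_\<lambda> v(x,0) (one-sided derivative at \<lambda> = 0)
  for the harmonic extension v.\<close>
definition is_D :: "'a::euclidean_space set \<Rightarrow> ('a \<Rightarrow> real) \<Rightarrow> ('a \<Rightarrow> real) \<Rightarrow> ('a \<times> real \<Rightarrow> real) \<Rightarrow> 'a \<Rightarrow> real \<Rightarrow> bool" where
  "is_D H \<phi> u v x d \<longleftrightarrow> ((\<lambda>t. v (x, t)) has_real_derivative (- d)) (at 0 within {0..})"

end

theory Submission
  imports Defs
begin

(* Let v be the bounded harmonic extension of u to the half-cylinder Omega = H x (0,oo).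
   (1) Weak minimum principle on Omega: v >= 0.  A negative value would survive adding the
       barrier eps (t + K - |x|^2); since v is bounded, the minimum of the perturbed function
       is attained on a compact truncation of Omega, yet it can lie neither on the boundary
       (where the data are >= 0) nor inside (harmonic + strictly superharmonic has no local
       minimum).
   (2) Hopf's lemma, via the classical Gaussian barrier on an annulus, and from it the strong
       minimum principle: on the connected set Omega, v > 0 everywhere or v = 0 identically.
   (3) If v > 0 and u(x0) = 0 for some x0 in H, Hopf's lemma in the ball of radius r centred
       at (x0, r) gives D u(x0) = - d/dt v(x0, 0) < 0, contradicting D u + c u >= 0 at x0.
       If v = 0, then u = v(., 0) = 0 by continuity up to the bottom of Omega. *)

section \<open>One-variable calculus along lines\<close>

lemma second_derivative_nonneg_at_local_min:
  fixes \<phi> \<phi>' :: "real \<Rightarrow> real"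
  assumes \<delta>: "\<delta> > 0"
    and der: "\<And>s. \<bar>s\<bar> < \<delta> \<Longrightarrow> (\<phi> has_real_derivative \<phi>' s) (at s)"
    and der2: "(\<phi>' has_real_derivative D) (at 0)"
    and min: "\<And>s. \<bar>s\<bar> < \<delta> \<Longrightarrow> \<phi> 0 \<le> \<phi> s"
  shows "D \<ge> 0"
proof (rule ccontr)
  assume "\<not> D \<ge> 0"
  have crit: "\<phi>' 0 = 0"
    using DERIV_local_min[OF der[of 0] \<delta>] min \<delta> by auto
  have "((\<lambda>y. (\<phi>' y - \<phi>' 0) / (y - 0)) \<longlongrightarrow> D) (at 0)"
    using der2 has_field_derivative_iff by blast
  hence "((\<lambda>y. \<phi>' y / y) \<longlongrightarrow> D) (at 0)" using crit by simp
  hence "eventually (\<lambda>y. \<phi>' y / y < 0) (at 0)"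
    using \<open>\<not> D \<ge> 0\<close> order_tendstoD(2) by fastforce
  then obtain e where e: "e > 0" "\<And>y. y \<noteq> 0 \<Longrightarrow> dist y 0 < e \<Longrightarrow> \<phi>' y / y < 0"
    unfolding eventually_at by blast
  \<comment> \<open>so \<open>\<phi>'\<close> is negative just to the right of \<open>0\<close>, and \<open>\<phi>\<close> decreases there\<close>
  define \<eta> where "\<eta> = min e \<delta> / 2"
  have \<eta>: "\<eta> > 0" "\<eta> < e" "\<eta> < \<delta>" using e \<delta> by (auto simp: \<eta>_def)
  obtain z where z: "0 < z" "z < \<eta>" "\<phi> \<eta> - \<phi> 0 = \<eta> * \<phi>' z"
    using MVT2[OF \<eta>(1), of \<phi> \<phi>'] der \<eta> by auto
  have "\<phi>' z / z < 0" using e(2)[of z] z \<eta> by auto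
  hence "\<eta> * \<phi>' z < 0" using z \<eta>(1) by (simp add: divide_less_0_iff mult_pos_neg)
  moreover have "\<phi> 0 \<le> \<phi> \<eta>" using min[of \<eta>] \<eta> by auto
  ultimately show False using z by linarith
qed

lemma right_derivative_ge_of_touching_below:
  fixes \<psi> h :: "real \<Rightarrow> real"
  assumes d\<psi>: "(\<psi> has_real_derivative D) (at 0 within {0..})"
    and dh: "(h has_real_derivative E) (at 0)"
    and \<eta>: "\<eta> > 0" and below: "\<And>s. 0 \<le> s \<Longrightarrow> s \<le> \<eta> \<Longrightarrow> h s \<le> \<psi> s"
    and touch: "h 0 = \<psi> 0"
  shows "E \<le> D"
proof -
  have lim\<psi>: "((\<lambda>y. (\<psi> y - \<psi> 0) / (y - 0)) \<longlongrightarrow> D) (at_right 0)"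
    using d\<psi> has_field_derivative_iff at_within_Ici_at_right by metis
  have "(h has_real_derivative E) (at 0 within {0..})"
    using dh has_field_derivative_at_within by blast
  hence limh: "((\<lambda>y. (h y - h 0) / (y - 0)) \<longlongrightarrow> E) (at_right 0)"
    using has_field_derivative_iff at_within_Ici_at_right by metis
  have "\<forall>y>0. y < \<eta> \<longrightarrow> (h y - h 0) / (y - 0) \<le> (\<psi> y - \<psi> 0) / (y - 0)"
    using below touch by (auto simp: divide_right_mono)
  hence "eventually (\<lambda>y. (h y - h 0) / (y - 0) \<le> (\<psi> y - \<psi> 0) / (y - 0)) (at_right 0)"
    unfolding eventually_at_right_field using \<eta> by blast
  thus ?thesis
    by (rule tendsto_le[OF trivial_limit_at_right_real lim\<psi> limh])
qed

lemma has_real_derivative_along_line: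
  fixes f :: "'b::euclidean_space \<Rightarrow> real"
  assumes "f differentiable (at (z + s0 *\<^sub>R b))"
  shows "((\<lambda>s. f (z + s *\<^sub>R b)) has_real_derivative
           frechet_derivative f (at (z + s0 *\<^sub>R b)) b) (at s0)"
proof -
  let ?L = "frechet_derivative f (at (z + s0 *\<^sub>R b))"
  have fd: "(f has_derivative ?L) (at (z + s0 *\<^sub>R b))"
    using assms frechet_derivative_works by blast
  have "((\<lambda>s. z + s *\<^sub>R b) has_derivative (\<lambda>h. h *\<^sub>R b)) (at s0)"
    by (auto intro!: derivative_eq_intros)
  hence "((f \<circ> (\<lambda>s. z + s *\<^sub>R b)) has_derivative (?L \<circ> (\<lambda>h. h *\<^sub>R b))) (at s0)"
    by (rule diff_chain_at) (use fd in simp)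
  moreover have "?L \<circ> (\<lambda>h. h *\<^sub>R b) = (\<lambda>h. ?L b * h)"
    using has_derivative_bounded_linear[OF fd]
    by (auto simp: fun_eq_iff linear_simps(5))
  ultimately show ?thesis
    by (simp add: has_field_derivative_def comp_def)
qed

section \<open>Local minima of harmonic functions perturbed by superharmonic ones\<close>

text \<open>\<open>\<Delta>G(z) < 0\<close>, expressed through second derivatives along the coordinate lines
  through \<open>z\<close> (which avoids computing Fr\'echet derivatives of explicit barriers).\<close>
definition strict_superharmonic_at :: "('b::euclidean_space \<Rightarrow> real) \<Rightarrow> 'b \<Rightarrow> bool" where
  "strict_superharmonic_at G z \<longleftrightarrow>
     (\<exists>DG D2G. (\<forall>b\<in>Basis. \<forall>s. ((\<lambda>s. G (z + s *\<^sub>R b)) has_real_derivative DG b s) (at s)) \<and>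
               (\<forall>b\<in>Basis. (DG b has_real_derivative D2G b) (at 0)) \<and>
               (\<Sum>b\<in>Basis. D2G b) < 0)"

lemma laplacian_plus_nonneg_at_local_min:
  fixes v G :: "'b::euclidean_space \<Rightarrow> real"
  assumes S: "open S" and C2: "Ck 2 v S" and zS: "z \<in> S" and \<delta>: "\<delta> > 0"
    and min: "\<And>y. y \<in> ball z \<delta> \<Longrightarrow> v z + G z \<le> v y + G y"
    and DG: "\<And>b s. b \<in> Basis \<Longrightarrow> ((\<lambda>s. G (z + s *\<^sub>R b)) has_real_derivative DG b s) (at s)"
    and D2G: "\<And>b. b \<in> Basis \<Longrightarrow> (DG b has_real_derivative D2G b) (at 0)"
  shows "laplacian v z + (\<Sum>b\<in>Basis. D2G b) \<ge> 0"
proof -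
  obtain e where e: "e > 0" "ball z e \<subseteq> S" using S zS open_contains_ball by blast
  define \<delta>' where "\<delta>' = min e \<delta>"
  have \<delta>': "\<delta>' > 0" "ball z \<delta>' \<subseteq> S" "ball z \<delta>' \<subseteq> ball z \<delta>" using e \<delta> by (auto simp: \<delta>'_def)
  have diff: "\<And>x. x \<in> S \<Longrightarrow> v differentiable (at x)"
    and diff2: "\<And>b x. b \<in> Basis \<Longrightarrow> x \<in> S \<Longrightarrow>
                  (\<lambda>y. frechet_derivative v (at y) b) differentiable (at x)"
    using C2 by (simp_all add: numeral_2_eq_2)
  have along_b: "frechet_derivative (\<lambda>y. frechet_derivative v (at y) b) (at z) b + D2G b \<ge> 0"
    if b: "b \<in> Basis" for b
  proof -
    have line: "z + s *\<^sub>R b \<in> ball z \<delta>'" if "\<bar>s\<bar> < \<delta>'" for s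
      using that b by (simp add: dist_norm)
    show ?thesis
    proof (rule second_derivative_nonneg_at_local_min[OF \<delta>'(1),
          where \<phi> = "\<lambda>s. v (z + s *\<^sub>R b) + G (z + s *\<^sub>R b)"
            and \<phi>' = "\<lambda>s. frechet_derivative v (at (z + s *\<^sub>R b)) b + DG b s"])
      fix s :: real assume "\<bar>s\<bar> < \<delta>'"
      hence "z + s *\<^sub>R b \<in> S" using line \<delta>'(2) by blast
      thus "((\<lambda>s. v (z + s *\<^sub>R b) + G (z + s *\<^sub>R b)) has_real_derivative
            frechet_derivative v (at (z + s *\<^sub>R b)) b + DG b s) (at s)"
        by (intro DERIV_add has_real_derivative_along_line diff DG b)
    next
      have "((\<lambda>s. frechet_derivative v (at (z + s *\<^sub>R b)) b) has_real_derivative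
            frechet_derivative (\<lambda>y. frechet_derivative v (at y) b) (at (z + 0 *\<^sub>R b)) b) (at 0)"
        by (rule has_real_derivative_along_line) (use diff2 b zS in simp)
      thus "((\<lambda>s. frechet_derivative v (at (z + s *\<^sub>R b)) b + DG b s) has_real_derivative
            frechet_derivative (\<lambda>y. frechet_derivative v (at y) b) (at z) b + D2G b) (at 0)"
        by (intro DERIV_add D2G b) simp
    next
      fix s :: real assume "\<bar>s\<bar> < \<delta>'"
      hence "z + s *\<^sub>R b \<in> ball z \<delta>" using line \<delta>'(3) by blast
      thus "v (z + 0 *\<^sub>R b) + G (z + 0 *\<^sub>R b) \<le> v (z + s *\<^sub>R b) + G (z + s *\<^sub>R b)"
        using min by simp
    qed
  qed
  have "0 \<le> (\<Sum>b\<in>Basis. frechet_derivative (\<lambda>y. frechet_derivative v (at y) b) (at z) b + D2G b)"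
    using along_b by (simp add: sum_nonneg)
  thus ?thesis by (simp add: laplacian_def sum.distrib)
qed

lemma harmonic_plus_strict_superharmonic_no_local_min:
  fixes v G :: "'b::euclidean_space \<Rightarrow> real"
  assumes harm: "harmonic_on v S" and zS: "z \<in> S" and \<delta>: "\<delta> > 0"
    and min: "\<And>y. y \<in> ball z \<delta> \<Longrightarrow> v z + G z \<le> v y + G y"
    and sup: "strict_superharmonic_at G z"
  shows False
proof -
  obtain DG D2G where
    DG: "\<forall>b\<in>Basis. \<forall>s. ((\<lambda>s. G (z + s *\<^sub>R b)) has_real_derivative DG b s) (at s)"
    and D2G: "\<forall>b\<in>Basis. (DG b has_real_derivative D2G b) (at 0)"
    and neg: "(\<Sum>b\<in>Basis. D2G b) < 0"
    using sup unfolding strict_superharmonic_at_def by blast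
  have "laplacian v z + (\<Sum>b\<in>Basis. D2G b) \<ge> 0"
    using harm zS \<delta> min DG D2G
    by (intro laplacian_plus_nonneg_at_local_min[where S = S]) (auto simp: harmonic_on_def)
  thus False using neg harm zS by (simp add: harmonic_on_def)
qed

lemma gaussian_barrier_strict_superharmonic:
  fixes y z :: "'b::euclidean_space"
  assumes m: "m > 0" and \<alpha>: "\<alpha> > 0"
    and far: "2 * real DIM('b) < 4 * \<alpha> * ((z - y) \<bullet> (z - y))"
  shows "strict_superharmonic_at (\<lambda>x. - m * (exp (- \<alpha> * ((x - y) \<bullet> (x - y))) - c)) z"
proof -
  define \<rho> where "\<rho> = (z - y) \<bullet> (z - y)"
  define DG where "DG b s = m * \<alpha> * (2 * ((z - y) \<bullet> b) + 2 * s) *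
      exp (- \<alpha> * (\<rho> + 2 * s * ((z - y) \<bullet> b) + s^2))" for b :: 'b and s
  define D2G where "D2G b = m * \<alpha> * exp (- \<alpha> * \<rho>) * (2 - 4 * \<alpha> * ((z - y) \<bullet> b)^2)" for b :: 'b
  have line: "(\<lambda>s. - m * (exp (- \<alpha> * ((z + s *\<^sub>R b - y) \<bullet> (z + s *\<^sub>R b - y))) - c)) =
      (\<lambda>s. - m * (exp (- \<alpha> * (\<rho> + 2 * s * ((z - y) \<bullet> b) + s^2)) - c))"
    if b: "b \<in> Basis" for b
  proof -
    have "(z + s *\<^sub>R b - y) \<bullet> (z + s *\<^sub>R b - y) = \<rho> + 2 * s * ((z - y) \<bullet> b) + s^2" for s
    proof -
      have "z + s *\<^sub>R b - y = (z - y) + s *\<^sub>R b" by (simp add: algebra_simps)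
      thus ?thesis using b unfolding \<rho>_def
        by (simp add: inner_add_left inner_add_right inner_commute power2_eq_square algebra_simps)
    qed
    thus ?thesis by simp
  qed
  have "(\<Sum>b\<in>Basis. (2 - 4 * \<alpha> * ((z - y) \<bullet> b)^2)) = 2 * real DIM('b) - 4 * \<alpha> * \<rho>"
    by (simp add: sum_subtractf sum_distrib_left[symmetric] \<rho>_def
        euclidean_inner[of "z - y" "z - y"] power2_eq_square)
  hence "(\<Sum>b\<in>Basis. D2G b) = m * \<alpha> * exp (- \<alpha> * \<rho>) * (2 * real DIM('b) - 4 * \<alpha> * \<rho>)"
    unfolding D2G_def sum_distrib_left[symmetric] by simp
  also have "\<dots> < 0"
    using m \<alpha> far by (simp add: \<rho>_def mult_pos_neg)
  finally have "(\<Sum>b\<in>Basis. D2G b) < 0" .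
  moreover have "((\<lambda>s. - m * (exp (- \<alpha> * ((z + s *\<^sub>R b - y) \<bullet> (z + s *\<^sub>R b - y))) - c))
      has_real_derivative DG b s) (at s)" if "b \<in> Basis" for b s
    unfolding line[OF that] DG_def by (auto intro!: derivative_eq_intros simp: algebra_simps)
  moreover have "(DG b has_real_derivative D2G b) (at 0)" for b
    unfolding DG_def[abs_def] D2G_def
    by (auto intro!: derivative_eq_intros simp: algebra_simps power2_eq_square)
  ultimately show ?thesis
    unfolding strict_superharmonic_at_def by blast
qed

lemma paraboloid_strict_superharmonic:
  fixes z :: "'a::euclidean_space \<times> real"
  assumes \<epsilon>: "\<epsilon> > 0"
  shows "strict_superharmonic_at (\<lambda>p. \<epsilon> * (snd p + K - fst p \<bullet> fst p)) z"
proof -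
  obtain x t where z: "z = (x, t)" by (cases z)
  define DG where "DG b s = \<epsilon> * (snd b - 2 * (x \<bullet> fst b) - 2 * s * (fst b \<bullet> fst b))"
    for b :: "'a \<times> real" and s
  define D2G where "D2G b = - 2 * \<epsilon> * (fst b \<bullet> fst b)" for b :: "'a \<times> real"
  have "((\<lambda>s. \<epsilon> * (snd (z + s *\<^sub>R b) + K - fst (z + s *\<^sub>R b) \<bullet> fst (z + s *\<^sub>R b)))
      has_real_derivative DG b s) (at s)" for b s
  proof -
    have "(\<lambda>s. \<epsilon> * (snd (z + s *\<^sub>R b) + K - fst (z + s *\<^sub>R b) \<bullet> fst (z + s *\<^sub>R b))) =
        (\<lambda>s. \<epsilon> * (t + s * snd b + K - (x \<bullet> x + 2 * s * (x \<bullet> fst b) + s^2 * (fst b \<bullet> fst b))))"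
      by (auto simp: fun_eq_iff z inner_add_left inner_add_right inner_commute
          power2_eq_square algebra_simps)
    thus ?thesis
      unfolding DG_def by (auto intro!: derivative_eq_intros simp: algebra_simps)
  qed
  moreover have "(DG b has_real_derivative D2G b) (at 0)" for b
    unfolding DG_def[abs_def] D2G_def by (auto intro!: derivative_eq_intros simp: algebra_simps)
  moreover have "(\<Sum>b\<in>Basis. D2G b) < 0"
  proof -
    obtain e :: 'a where e: "e \<in> Basis" using nonempty_Basis by blast
    have "(e, 0) \<in> (Basis :: ('a \<times> real) set)" using e by (auto simp: Basis_prod_def)
    hence "1 \<le> (\<Sum>b\<in>(Basis :: ('a \<times> real) set). fst b \<bullet> fst b)"
      using member_le_sum[of "(e, 0)" Basis "\<lambda>b. fst b \<bullet> fst b"] e by auto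
    moreover have "(\<Sum>b\<in>Basis. D2G b) = - 2 * \<epsilon> * (\<Sum>b\<in>(Basis :: ('a \<times> real) set). fst b \<bullet> fst b)"
      unfolding D2G_def by (simp add: sum_distrib_left)
    ultimately show ?thesis using \<epsilon> by (simp add: mult_pos_pos)
  qed
  ultimately show ?thesis
    unfolding strict_superharmonic_at_def by blast
qed

section \<open>Hopf's lemma and the strong minimum principle\<close>

lemma harmonic_above_gaussian_barrier:
  fixes v :: "'b::euclidean_space \<Rightarrow> real"
  assumes harm: "harmonic_on v S" and r: "r > 0"
    and annulus: "\<And>z. r/2 < dist y z \<Longrightarrow> dist y z < r \<Longrightarrow> z \<in> S"
    and cont: "continuous_on (cball y r) v"
    and outer: "\<And>z. dist y z = r \<Longrightarrow> 0 \<le> v z"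
    and inner: "\<And>z. dist y z = r/2 \<Longrightarrow> m \<le> v z"
    and m: "m > 0" and \<alpha>: "2 * real DIM('b) < \<alpha> * r^2"
    and z: "r/2 \<le> dist y z" "dist y z \<le> r"
  shows "m * (exp (- \<alpha> * (dist y z)^2) - exp (- \<alpha> * r^2)) \<le> v z"
proof (rule ccontr)
  define g where "g x = exp (- \<alpha> * ((x - y) \<bullet> (x - y))) - exp (- \<alpha> * r^2)" for x
  have g_dist: "g x = exp (- \<alpha> * (dist y x)^2) - exp (- \<alpha> * r^2)" for x
    by (simp add: g_def dot_square_norm dist_norm norm_minus_commute)
  have "0 < 2 * real DIM('b)" by simp
  hence "0 < \<alpha> * r^2" using \<alpha> by linarith
  hence \<alpha>_pos: "\<alpha> > 0" by (smt (verit) mult_nonpos_nonneg zero_le_power2)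
  have g_le: "g x \<le> 1" for x
  proof -
    have "- \<alpha> * ((x - y) \<bullet> (x - y)) \<le> 0" using \<alpha>_pos by simp
    hence "exp (- \<alpha> * ((x - y) \<bullet> (x - y))) \<le> 1" by (simp del: mult_minus_left)
    thus ?thesis using exp_gt_zero[of "- \<alpha> * r^2"] unfolding g_def by linarith
  qed
  define A where "A = cball y r - ball y (r/2)"
  assume "\<not> ?thesis"
  hence "v z - m * g z < 0" by (simp add: g_dist)
  moreover have "z \<in> A" using z by (simp add: A_def)
  moreover have "compact A" unfolding A_def by (intro compact_diff) auto
  moreover have "continuous_on A (\<lambda>x. v x - m * g x)"
    unfolding g_def A_def by (intro continuous_intros continuous_on_subset[OF cont]) auto
  ultimately obtain zs where zs: "zs \<in> A" "\<And>x. x \<in> A \<Longrightarrow> v zs - m * g zs \<le> v x - m * g x"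
    and neg: "v zs - m * g zs < 0"
    using continuous_attains_inf[of A "\<lambda>x. v x - m * g x"] by (metis empty_iff order_le_less_trans)
  have "r/2 \<le> dist y zs" "dist y zs \<le> r" using zs(1) by (auto simp: A_def)
  then consider "dist y zs = r" | "dist y zs = r/2" | "r/2 < dist y zs" "dist y zs < r"
    by linarith
  thus False
  proof cases
    case 1
    thus False using outer[OF 1] neg by (simp add: g_dist)
  next
    case 2
    thus False using inner[OF 2] neg m g_le[of zs] mult_left_le[of "g zs" m] by linarith
  next
    case 3
    \<comment> \<open>an interior minimum of \<open>v - m g\<close> is excluded since \<open>-m g\<close> is strictly superharmonic\<close>
    define \<delta> where "\<delta> = min (dist y zs - r/2) (r - dist y zs)"
    have \<delta>: "\<delta> > 0" using 3 by (simp add: \<delta>_def)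
    have ball_A: "x \<in> A" if "x \<in> ball zs \<delta>" for x
    proof -
      have "dist zs x < \<delta>" using that by simp
      moreover have "dist y x \<le> dist y zs + dist zs x" "dist y zs \<le> dist y x + dist zs x"
        using dist_triangle[of y x zs] dist_triangle[of y zs x] by (auto simp: dist_commute)
      ultimately show ?thesis unfolding A_def \<delta>_def by auto
    qed
    have "(r/2)^2 < (dist y zs)^2" using 3 r by (intro power_strict_mono) auto
    hence "r^2 < 4 * (dist y zs)^2" by (simp add: power_divide)
    hence "\<alpha> * r^2 < \<alpha> * (4 * (dist y zs)^2)" using \<alpha>_pos by (rule mult_strict_left_mono)
    hence far: "2 * real DIM('b) < 4 * \<alpha> * ((zs - y) \<bullet> (zs - y))"
      using \<alpha> by (simp add: dot_square_norm dist_norm norm_minus_commute)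
    have "v zs + - m * g zs \<le> v x + - m * g x" if "x \<in> ball zs \<delta>" for x
      using zs(2)[OF ball_A[OF that]] by simp
    moreover have "strict_superharmonic_at (\<lambda>x. - m * g x) zs"
      unfolding g_def by (rule gaussian_barrier_strict_superharmonic[OF m \<alpha>_pos far])
    ultimately show False
      by (rule harmonic_plus_strict_superharmonic_no_local_min[OF harm annulus[OF 3] \<delta>])
  qed
qed

lemma dist_along_inward_ray:
  fixes y z0 :: "'b::real_normed_vector"
  assumes z0: "dist y z0 = r" and r: "0 < r" and s: "0 \<le> s" "s \<le> r"
  shows "dist y (z0 + s *\<^sub>R ((y - z0) /\<^sub>R r)) = r - s"
proof -
  have ray: "z0 + s *\<^sub>R ((y - z0) /\<^sub>R r) - y = (1 - s / r) *\<^sub>R (z0 - y)"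
    using r by (simp add: algebra_simps divide_inverse)
  have "dist y (z0 + s *\<^sub>R ((y - z0) /\<^sub>R r)) = norm (z0 + s *\<^sub>R ((y - z0) /\<^sub>R r) - y)"
    by (simp add: dist_norm norm_minus_commute)
  also have "\<dots> = \<bar>1 - s / r\<bar> * dist y z0" by (simp only: ray norm_scaleR dist_norm norm_minus_commute)
  also have "\<dots> = r - s" using s r z0 by (simp add: abs_of_nonneg field_simps)
  finally show ?thesis .
qed

lemma hopf_lemma:
  fixes v :: "'b::euclidean_space \<Rightarrow> real"
  assumes harm: "harmonic_on v S" and r: "r > 0"
    and annulus: "\<And>z. r/2 < dist y z \<Longrightarrow> dist y z < r \<Longrightarrow> z \<in> S"
    and cont: "continuous_on (cball y r) v"
    and pos: "\<And>z. z \<in> ball y r \<Longrightarrow> 0 < v z"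
    and z0: "dist y z0 = r" "v z0 = 0"
    and D: "((\<lambda>s. v (z0 + s *\<^sub>R ((y - z0) /\<^sub>R r))) has_real_derivative D) (at 0 within {0..})"
  shows "D > 0"
proof -
  have "v ` closure (ball y r) \<subseteq> {0..}"
    by (rule image_closure_subset) (use cont r pos in \<open>auto intro: less_imp_le\<close>)
  hence outer: "0 \<le> v z" if "dist y z = r" for z
    using that r by (force simp: image_subset_iff)
  \<comment> \<open>\<open>m\<close> = minimum of \<open>v\<close> on the inner sphere, which lies in the ball where \<open>v > 0\<close>\<close>
  obtain b0 :: 'b where b0: "b0 \<in> Basis" using nonempty_Basis by blast
  have "y + (r/2) *\<^sub>R b0 \<in> sphere y (r/2)" using b0 r by (simp add: dist_norm)
  moreover have sphere_ball: "sphere y (r/2) \<subseteq> ball y r" using r by auto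
  ultimately obtain zm where zm: "zm \<in> sphere y (r/2)" "\<And>z. z \<in> sphere y (r/2) \<Longrightarrow> v zm \<le> v z"
    using continuous_attains_inf[OF compact_sphere, of y "r/2" v]
      continuous_on_subset[OF cont] ball_subset_cball by blast
  define m where "m = v zm"
  have m: "m > 0" using pos zm(1) sphere_ball by (auto simp: m_def)
  define \<alpha> where "\<alpha> = 2 * real DIM('b) / r^2 + 1"
  have \<alpha>: "2 * real DIM('b) < \<alpha> * r^2" using r by (simp add: \<alpha>_def field_simps)
  have \<alpha>_pos: "\<alpha> > 0" unfolding \<alpha>_def by (intro add_nonneg_pos divide_nonneg_nonneg) simp_all
  define c where "c = exp (- \<alpha> * r^2)"
  \<comment> \<open>along the inward ray from \<open>z\<^sub>0\<close>, \<open>v\<close> dominates the barrier, which touches it at \<open>z\<^sub>0\<close>\<close>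
  define h where "h s = m * (exp (- \<alpha> * (r - s)^2) - c)" for s
  have inner: "m \<le> v z" if "dist y z = r/2" for z
    using zm(2)[of z] that by (simp add: m_def)
  have below: "h s \<le> v (z0 + s *\<^sub>R ((y - z0) /\<^sub>R r))" if s: "0 \<le> s" "s \<le> r/2" for s
  proof -
    let ?p = "z0 + s *\<^sub>R ((y - z0) /\<^sub>R r)"
    have dist_p: "dist y ?p = r - s" using dist_along_inward_ray[OF z0(1) r] s r by simp
    have "m * (exp (- \<alpha> * (dist y ?p)^2) - exp (- \<alpha> * r^2)) \<le> v ?p"
      by (rule harmonic_above_gaussian_barrier[OF harm r annulus cont outer inner m \<alpha>])
         (use dist_p s in auto)
    thus ?thesis unfolding dist_p h_def c_def .
  qed
  have dh: "(h has_real_derivative m * c * (2 * \<alpha> * r)) (at 0)"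
    unfolding h_def[abs_def] c_def
    by (auto intro!: derivative_eq_intros simp: algebra_simps power2_eq_square)
  have touch: "h 0 = v (z0 + 0 *\<^sub>R ((y - z0) /\<^sub>R r))" using z0 by (simp add: h_def c_def)
  have "m * c * (2 * \<alpha> * r) \<le> D"
    using r below touch by (intro right_derivative_ge_of_touching_below[OF D dh, where \<eta> = "r/2"]) auto
  moreover have "m * c * (2 * \<alpha> * r) > 0"
    using m r \<alpha>_pos by (simp add: c_def)
  ultimately show ?thesis by linarith
qed

lemma directional_derivative_zero_at_interior_min:
  fixes v :: "'b::euclidean_space \<Rightarrow> real"
  assumes S: "open S" and z: "z \<in> S" and diff: "v differentiable (at z)"
    and min: "\<And>x. x \<in> S \<Longrightarrow> v z \<le> v x"
  shows "((\<lambda>s. v (z + s *\<^sub>R e)) has_real_derivative 0) (at 0 within {0..})"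
proof -
  have "eventually (\<lambda>x. v z \<le> v x) (at z)"
    using S z min by (auto simp: eventually_at_topological)
  hence "frechet_derivative v (at z) = (\<lambda>h. 0)"
    using has_derivative_local_min diff frechet_derivative_works by blast
  thus ?thesis
    using has_real_derivative_along_line[of v z 0 e] diff has_field_derivative_at_within by fastforce
qed

text \<open>Otherwise a zero nearest to the centre would be an interior minimum (zero derivative)
  at which Hopf's lemma forces a positive derivative.\<close>
lemma harmonic_nonneg_positive_on_cball:
  fixes v :: "'b::euclidean_space \<Rightarrow> real"
  assumes harm: "harmonic_on v S" and nonneg: "\<And>z. z \<in> S \<Longrightarrow> 0 \<le> v z"
    and cb: "cball p R \<subseteq> S" and vp: "0 < v p" and q: "q \<in> cball p R"
  shows "0 < v q"
proof (rule ccontr)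
  have contS: "continuous_on S v"
    using harm by (simp add: harmonic_on_def numeral_2_eq_2)
  define K where "K = {x \<in> cball p R. v x = 0}"
  assume "\<not> 0 < v q"
  hence "q \<in> K" using nonneg q cb by (force simp: K_def)
  moreover have "compact K"
  proof -
    have "closed K" unfolding K_def
      by (rule continuous_closed_preimage_constant) (use continuous_on_subset[OF contS cb] in auto)
    thus ?thesis using compact_eq_bounded_closed bounded_subset[OF bounded_cball]
      by (metis (no_types, lifting) K_def mem_Collect_eq subsetI)
  qed
  ultimately obtain z0 where z0: "z0 \<in> K" "\<And>x. x \<in> K \<Longrightarrow> dist p z0 \<le> dist p x"
    using continuous_attains_inf[OF _ _ continuous_on_dist[OF continuous_on_const continuous_on_id],
      of K p] by blast
  define r where "r = dist p z0"
  have vz0: "v z0 = 0" and z0R: "r \<le> R" using z0(1) by (auto simp: K_def r_def)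
  have r: "r > 0" using vz0 vp by (auto simp: r_def)
  have cbr: "cball p r \<subseteq> S" using cb z0R by (meson order_trans subset_cball)
  have "z0 \<in> cball p r" by (simp add: r_def)
  hence z0S: "z0 \<in> S" using cbr by blast
  have pos: "0 < v x" if "x \<in> ball p r" for x
  proof -
    have "x \<notin> K" using z0(2)[of x] that by (force simp: r_def)
    thus ?thesis using that cbr nonneg[of x] z0R by (force simp: K_def)
  qed
  \<comment> \<open>\<open>z\<^sub>0\<close> is an interior minimum, so the radial derivative vanishes there\<close>
  have "((\<lambda>s. v (z0 + s *\<^sub>R ((p - z0) /\<^sub>R r))) has_real_derivative 0) (at 0 within {0..})"
    using harm z0S nonneg vz0
    by (intro directional_derivative_zero_at_interior_min[where S = S])
       (auto simp: harmonic_on_def numeral_2_eq_2)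
  moreover have "continuous_on (cball p r) v" using continuous_on_subset[OF contS cbr] .
  moreover have "\<And>x. r/2 < dist p x \<Longrightarrow> dist p x < r \<Longrightarrow> x \<in> S" using cbr by auto
  moreover have "dist p z0 = r" by (simp add: r_def)
  ultimately have "(0::real) > 0"
    using hopf_lemma[OF harm r _ _ pos _ vz0] by blast
  thus False by simp
qed

lemma harmonic_nonneg_positive_or_zero:
  fixes v :: "'b::euclidean_space \<Rightarrow> real"
  assumes harm: "harmonic_on v S" and conn: "connected S" and nonneg: "\<And>z. z \<in> S \<Longrightarrow> 0 \<le> v z"
  shows "(\<forall>z\<in>S. 0 < v z) \<or> (\<forall>z\<in>S. v z = 0)"
proof -
  have S: "open S" and contS: "continuous_on S v"
    using harm by (simp_all add: harmonic_on_def numeral_2_eq_2)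
  define Z where "Z = {z \<in> S. v z = 0}"
  define P where "P = S \<inter> v -` {0<..}"
  have "open Z"
  proof (rule openI)
    fix z1 assume z1: "z1 \<in> Z"
    then obtain \<delta> where \<delta>: "\<delta> > 0" "cball z1 \<delta> \<subseteq> S"
      using S open_contains_cball_eq unfolding Z_def by blast
    have "x \<in> Z" if x: "x \<in> ball z1 (\<delta>/2)" for x
    proof -
      have "cball x (\<delta>/2) \<subseteq> S"
      proof
        fix w assume "w \<in> cball x (\<delta>/2)"
        hence "dist z1 w \<le> \<delta>" using x dist_triangle[of z1 w x] by auto
        thus "w \<in> S" using \<delta>(2) by auto
      qed
      moreover have "z1 \<in> cball x (\<delta>/2)" using x by (simp add: dist_commute)
      ultimately have "\<not> 0 < v x"
        using harmonic_nonneg_positive_on_cball[OF harm nonneg] z1 by (force simp: Z_def)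
      moreover have "x \<in> S" using x \<delta> by auto
      ultimately show ?thesis using nonneg[of x] by (simp add: Z_def)
    qed
    thus "\<exists>e>0. ball z1 e \<subseteq> Z" using \<delta> by (intro exI[of _ "\<delta>/2"]) auto
  qed
  moreover have "open P" unfolding P_def by (rule continuous_open_preimage[OF contS S]) auto
  moreover have "Z \<inter> P \<inter> S = {}" "S \<subseteq> Z \<union> P"
    using nonneg by (force simp: Z_def P_def)+
  ultimately have "Z \<inter> S = {} \<or> P \<inter> S = {}"
    using connectedD[OF conn] by blast
  thus ?thesis
  proof
    assume "Z \<inter> S = {}"
    thus ?thesis using nonneg by (force simp: Z_def less_le)
  next
    assume "P \<inter> S = {}"
    thus ?thesis using nonneg by (force simp: P_def)
  qed
qed

section \<open>The harmonic extension to the half-cylinder\<close>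

text \<open>On the lateral
  boundary and the bottom \<open>v \<ge> 0\<close>, and interior minima are excluded.\<close>
lemma harmonic_ext_perturbed_min_at_top:
  fixes H :: "'a::euclidean_space set" and v G :: "'a \<times> real \<Rightarrow> real"
  assumes oH: "open H" and hv: "harmonic_ext H \<phi> u v"
    and \<phi>: "\<forall>x\<in>frontier H. \<phi> x \<ge> 0" and u: "\<forall>x\<in>H. u x \<ge> 0"
    and G_pos: "\<And>z. fst z \<in> closure H \<Longrightarrow> 0 \<le> snd z \<Longrightarrow> 0 < G z"
    and G_sup: "\<And>z. z \<in> H \<times> {0<..} \<Longrightarrow> strict_superharmonic_at G z"
    and zs: "zs \<in> closure H \<times> {0..T}"
    and min: "\<And>z. z \<in> closure H \<times> {0..T} \<Longrightarrow> v zs + G zs \<le> v z + G z"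
    and neg: "v zs + G zs < 0"
  shows "zs \<in> H \<times> {T}"
proof -
  have harm: "harmonic_on v (H \<times> {0<..})" and bottom: "\<forall>x\<in>H. v (x, 0) = u x"
    and side: "\<forall>x\<in>frontier H. \<forall>t\<ge>0. v (x, t) = \<phi> x"
    using hv by (auto simp: harmonic_ext_def)
  obtain xs ts where zs_eq: "zs = (xs, ts)" by (cases zs)
  hence xs: "xs \<in> closure H" and ts: "0 \<le> ts" "ts \<le> T" using zs by auto
  have "0 < G zs" using G_pos xs ts by (simp add: zs_eq)
  hence v_neg: "v zs < 0" using neg by linarith
  consider "xs \<in> frontier H" | "xs \<in> H" "ts = 0" | "xs \<in> H" "0 < ts" "ts < T" | "xs \<in> H" "ts = T"
    using xs ts oH by (fastforce simp: frontier_def interior_open)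
  thus ?thesis
  proof cases
    case 1
    thus ?thesis using side \<phi> ts v_neg by (auto simp: zs_eq)
  next
    case 2
    thus ?thesis using bottom u v_neg by (auto simp: zs_eq)
  next
    case 3
    obtain d where d: "d > 0" "ball xs d \<subseteq> H" using oH 3 open_contains_ball by blast
    define \<delta> where "\<delta> = min d (min ts (T - ts))"
    have \<delta>: "\<delta> > 0" using d 3 ts by (simp add: \<delta>_def)
    have "p \<in> closure H \<times> {0..T}" if "p \<in> ball zs \<delta>" for p
    proof -
      have "dist xs (fst p) < \<delta>" "dist ts (snd p) < \<delta>"
        using that dist_fst_le[of zs p] dist_snd_le[of zs p] by (auto simp: zs_eq)
      hence "fst p \<in> H" "0 \<le> snd p" "snd p \<le> T"
        using d by (auto simp: \<delta>_def dist_real_def)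
      thus ?thesis using closure_subset by (cases p) auto
    qed
    hence local_min: "v zs + G zs \<le> v p + G p" if "p \<in> ball zs \<delta>" for p
      using min that by blast
    have "zs \<in> H \<times> {0<..}" using 3 by (simp add: zs_eq)
    thus ?thesis
      using harmonic_plus_strict_superharmonic_no_local_min[OF harm _ \<delta> local_min] G_sup by blast
  next
    case 4
    thus ?thesis by (simp add: zs_eq)
  qed
qed

text \<open>Boundedness replaces the missing
  boundary condition at \<open>t = \<infinity>\<close>: with the barrier \<open>\<epsilon> (t + K - |x|^2)\<close> added, a negative
  minimum would have to sit at a height \<open>T\<close> where the barrier already exceeds \<open>sup |v|\<close>.\<close>
lemma harmonic_ext_nonneg:
  fixes H :: "'a::euclidean_space set" and v :: "'a \<times> real \<Rightarrow> real"
  assumes oH: "open H" and bH: "bounded H" and hv: "harmonic_ext H \<phi> u v"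
    and \<phi>: "\<forall>x\<in>frontier H. \<phi> x \<ge> 0" and u: "\<forall>x\<in>H. u x \<ge> 0"
    and z0: "z0 \<in> H \<times> {0<..}"
  shows "0 \<le> v z0"
proof (rule ccontr)
  obtain M where M: "\<And>z. z \<in> H \<times> {0<..} \<Longrightarrow> \<bar>v z\<bar> \<le> M"
    using hv unfolding harmonic_ext_def bounded_iff by auto
  have cont: "continuous_on (closure H \<times> {0..}) v"
    using hv by (simp add: harmonic_ext_def closure_Times)
  obtain B where B: "\<And>x. x \<in> closure H \<Longrightarrow> norm x \<le> B"
    using bounded_closure[OF bH] unfolding bounded_iff by auto
  define G where "G z = snd z + (B^2 + 1) - fst z \<bullet> fst z" for z :: "'a \<times> real"
  have G_ge: "snd z + 1 \<le> G z" if "fst z \<in> closure H" for z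
  proof -
    have "(norm (fst z))^2 \<le> B^2" using B[OF that] by (simp add: power_mono)
    thus ?thesis by (simp add: G_def dot_square_norm)
  qed
  assume "\<not> 0 \<le> v z0"
  obtain x0 t0 where z0_eq: "z0 = (x0, t0)" and x0: "x0 \<in> H" and t0: "t0 > 0" using z0 by auto
  have G_z0: "t0 + 1 \<le> G z0" using G_ge[of z0] z0_eq x0 closure_subset by auto
  define \<epsilon> where "\<epsilon> = - v z0 / (2 * G z0)"
  have \<epsilon>: "\<epsilon> > 0" using \<open>\<not> 0 \<le> v z0\<close> G_z0 t0 unfolding \<epsilon>_def by (intro divide_pos_pos) auto
  define w where "w z = v z + \<epsilon> * G z" for z
  have w_z0: "w z0 < 0"
    using \<open>\<not> 0 \<le> v z0\<close> G_z0 t0 by (simp add: w_def \<epsilon>_def)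
  define T where "T = t0 + M / \<epsilon> + 1"
  have "0 \<le> M" using M[OF z0] by linarith
  hence "0 \<le> M / \<epsilon>" using \<epsilon> by simp
  hence T: "t0 < T" by (simp add: T_def)
  define C where "C = closure H \<times> {0..T}"
  have "compact C" unfolding C_def using bH by (intro compact_Times compact_closure[THEN iffD2]) auto
  moreover have "continuous_on C w"
    unfolding w_def G_def C_def by (intro continuous_intros continuous_on_subset[OF cont]) auto
  moreover have "z0 \<in> C" using z0_eq x0 t0 T closure_subset by (auto simp: C_def)
  ultimately obtain zs where zs: "zs \<in> C" "\<And>z. z \<in> C \<Longrightarrow> w zs \<le> w z"
    using continuous_attains_inf[of C w] by blast
  have w_neg: "w zs < 0" using zs(2)[OF \<open>z0 \<in> C\<close>] w_z0 by simp
  have top: "zs \<in> H \<times> {T}"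
  proof (rule harmonic_ext_perturbed_min_at_top[OF oH hv \<phi> u, where G = "\<lambda>z. \<epsilon> * G z"])
    show "0 < \<epsilon> * G z" if "fst z \<in> closure H" "0 \<le> snd z" for z
      using G_ge[OF that(1)] that(2) \<epsilon> by (simp add: add_nonneg_pos)
    show "strict_superharmonic_at (\<lambda>z. \<epsilon> * G z) z" for z
      unfolding G_def by (rule paraboloid_strict_superharmonic[OF \<epsilon>])
  qed (use zs w_neg in \<open>auto simp: C_def w_def\<close>)
  \<comment> \<open>but at height \<open>T\<close> the barrier term alone exceeds \<open>M \<ge> -v\<close>\<close>
  hence "T + 1 \<le> G zs" using G_ge[of zs] closure_subset[of H] by auto
  hence "\<epsilon> * (T + 1) \<le> \<epsilon> * G zs" using \<epsilon> by simp
  moreover have "- M \<le> v zs" using M[of zs] top T t0 by auto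
  moreover have "\<epsilon> * (T + 1) = \<epsilon> * t0 + M + 2 * \<epsilon>" using \<epsilon> by (simp add: T_def field_simps)
  ultimately show False using w_neg \<epsilon> mult_pos_pos[OF \<epsilon> t0] unfolding w_def by linarith
qed

text \<open>It is applied in
  the ball of radius \<open>r\<close> centred at \<open>(x\<^sub>0, r)\<close>, which touches the bottom at \<open>(x\<^sub>0, 0)\<close>.\<close>
lemma harmonic_ext_D_negative_at_zero:
  fixes H :: "'a::euclidean_space set" and v :: "'a \<times> real \<Rightarrow> real"
  assumes oH: "open H" and hv: "harmonic_ext H \<phi> u v"
    and pos: "\<And>z. z \<in> H \<times> {0<..} \<Longrightarrow> 0 < v z"
    and x0: "x0 \<in> H" and u0: "u x0 = 0" and D: "is_D H \<phi> u v x0 d"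
  shows "d < 0"
proof -
  define \<Omega> where "\<Omega> = H \<times> ({0<..} :: real set)"
  have cont: "continuous_on (closure \<Omega>) v" and harm: "harmonic_on v \<Omega>"
    and bottom: "\<forall>x\<in>H. v (x, 0) = u x"
    using hv by (auto simp: harmonic_ext_def \<Omega>_def)
  obtain r where r: "r > 0" "cball x0 r \<subseteq> H" using oH x0 open_contains_cball by blast
  define y where "y = (x0, r)"
  have near_y: "dist x0 (fst q) \<le> dist y q" "dist r (snd q) \<le> dist y q" for q
    using dist_fst_le[of y q] dist_snd_le[of y q] by (auto simp: y_def)
  have ball_\<Omega>: "q \<in> \<Omega>" if "dist y q < r" for q
    using near_y[of q] that r by (cases q) (auto simp: \<Omega>_def dist_real_def)
  have "cball y r \<subseteq> closure \<Omega>"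
  proof
    fix q assume "q \<in> cball y r"
    hence "fst q \<in> H" "snd q \<ge> 0" using near_y[of q] r by (auto simp: dist_real_def)
    thus "q \<in> closure \<Omega>" using closure_subset by (cases q) (auto simp: \<Omega>_def closure_Times)
  qed
  hence cont_ball: "continuous_on (cball y r) v" using continuous_on_subset[OF cont] by blast
  have Dv: "((\<lambda>s. v ((x0, 0) + s *\<^sub>R ((y - (x0, 0)) /\<^sub>R r))) has_real_derivative - d)
      (at 0 within {0..})"
    using D r by (simp add: is_D_def y_def)
  have "dist y (x0, 0) = r" using r by (simp add: y_def dist_Pair_Pair)
  moreover have "v (x0, 0) = 0" using bottom x0 u0 by simp
  moreover have "\<And>q. r/2 < dist y q \<Longrightarrow> dist y q < r \<Longrightarrow> q \<in> \<Omega>" using ball_\<Omega> by blast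
  moreover have "\<And>q. q \<in> ball y r \<Longrightarrow> 0 < v q" using ball_\<Omega> pos by (simp add: \<Omega>_def)
  ultimately have "- d > 0"
    using hopf_lemma[OF harm r(1) _ cont_ball _ _ _ Dv] by blast
  thus ?thesis by simp
qed

lemma harmonic_ext_zero_trace:
  fixes H :: "'a::euclidean_space set" and v :: "'a \<times> real \<Rightarrow> real"
  assumes hv: "harmonic_ext H \<phi> u v" and zero: "\<forall>z\<in>H \<times> {0<..}. v z = 0" and x: "x \<in> H"
  shows "u x = 0"
proof -
  have "v ` closure (H \<times> ({0<..} :: real set)) \<subseteq> {0}"
    using hv zero by (intro image_closure_subset) (auto simp: harmonic_ext_def)
  moreover have "(x, 0) \<in> closure (H \<times> ({0<..} :: real set))"
    using x closure_subset by (auto simp: closure_Times)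
  ultimately show ?thesis using hv x by (force simp: harmonic_ext_def)
qed

theorem mainTheorem9:
  fixes H :: "'a::euclidean_space set"
    and c u \<phi> :: "'a \<Rightarrow> real"
  assumes "smooth_bounded_domain H"
    and "Linfty_on c H"
    and "Ck 2 u H" and "continuous_on (closure H) u"
    and "\<forall>x\<in>frontier H. \<phi> x \<ge> 0"
    and "\<forall>x\<in>frontier H. u x = \<phi> x"
    and "\<forall>x\<in>H. u x \<ge> 0"
    and "\<exists>v. harmonic_ext H \<phi> u v \<and>
           (\<forall>x\<in>H. \<exists>d. is_D H \<phi> u v x d \<and> d + c x * u x \<ge> 0)"
  shows "(\<forall>x\<in>H. u x > 0) \<or> (\<forall>x\<in>H. u x = 0)"
proof -
  obtain v where hv: "harmonic_ext H \<phi> u v"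
    and D: "\<forall>x\<in>H. \<exists>d. is_D H \<phi> u v x d \<and> d + c x * u x \<ge> 0"
    using assms(8) by blast
  have oH: "open H" and cH: "connected H" and bH: "bounded H"
    using assms(1) by (auto simp: smooth_bounded_domain_def)
  have "harmonic_on v (H \<times> {0<..})" using hv by (simp add: harmonic_ext_def)
  moreover have "connected (H \<times> ({0<..} :: real set))" by (intro connected_Times cH) auto
  moreover have "\<And>z. z \<in> H \<times> {0<..} \<Longrightarrow> 0 \<le> v z"
    by (rule harmonic_ext_nonneg[OF oH bH hv assms(5,7)])
  ultimately consider (positive) "\<forall>z\<in>H \<times> {0<..}. 0 < v z" | (zero) "\<forall>z\<in>H \<times> {0<..}. v z = 0"
    using harmonic_nonneg_positive_or_zero by blast
  thus ?thesis
  proof cases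
    case positive
    \<comment> \<open>at a zero of \<open>u\<close> the hypothesis \<open>D u + c u \<ge> 0\<close> reads \<open>D u \<ge> 0\<close>, contradicting Hopf\<close>
    hence "u x \<noteq> 0" if "x \<in> H" for x
      using D harmonic_ext_D_negative_at_zero[OF oH hv _ that] that by fastforce
    thus ?thesis using assms(7) by (simp add: less_le)
  next
    case zero
    thus ?thesis using harmonic_ext_zero_trace[OF hv] by blast
  qed
qed
end
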